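(* Let $V:P\to B(\mathcal{H})$ be an isometric representation with commuting range projections. Then: (1) for every $g\in G$ the operator $W_g:=V_b^*V_a$, where $g=ab^{-1}$ with $a,b\in P$, does not depend on the choice of $a,b$, and it is a partial isometry; (2) the projections $E_g:=W_gW_g^*$, $g\in G$, pairwise commute; (3) if $g_1,g_2\in G$ satisfy $g_1g_2^{-1}\in P$, then $E_{g_1}\le E_{g_2}$; (4) the map $G\ni g\mapsto W_g\in B(\mathcal{H})$ is strongly continuous; (5) for all $g,h\in G$, $W_gW_h=E_gW_{hg}$.
   Context: Standing assumptions: $G$ is a second countable locally compact group with left Haar measure $dg$ and modular function $\Delta$; $P\subset G$ is a closed subsemigroup with identity $e\in P$, such that $G=PP^{-1}$ and the interior $Int(P)$ of $P$ is dense in $P$. An isometric representation with commuting range projections is a map $V:P\to B(\mathcal{H})$ ($\mathcal{H}$ a Hilbert space) such that $a\mapsto V_a$ and $a\mapsto V_a^*$ are strongly continuous, each $V_a$ is an isometry, $V_aV_b=V_{ba}$ for $a,b\in P$, and the projections $E_a:=V_aV_a^*$ ($a\in P$) pairwise commute. *)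

theory Defs
  imports "HOL-Analysis.Analysis"
begin

text \<open>The group G is a type 'g of class topological_group_add, written
additively (not assumed commutative): the product gh of the paper is g + h, the
inverse g^{-1} is -g, and g h^{-1} is g - h = g + (-h); the identity is 0.
The Hilbert space is a real Hilbert space 'h (class real_inner + complete_space);
operators are bounded linear maps 'h => 'h, and T^* is the library adjoint.\<close>

definition partial_isometry :: "('h::real_inner \<Rightarrow> 'h) \<Rightarrow> bool" where
  "partial_isometry T \<longleftrightarrow> bounded_linear T \<and>
     (\<forall>x. (\<forall>y. T y = 0 \<longrightarrow> x \<bullet> y = 0) \<longrightarrow> norm (T x) = norm x)"

definition op_le :: "('h::real_inner \<Rightarrow> 'h) \<Rightarrow> ('h \<Rightarrow> 'h) \<Rightarrow> bool" where
  "op_le S T \<longleftrightarrow> (\<forall>x. S x \<bullet> x \<le> T x \<bullet> x)"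

definition admissible_semigroup :: "'g::{topological_group_add,t2_space,second_countable_topology} set \<Rightarrow> bool" where
  "admissible_semigroup P \<longleftrightarrow>
     locally_compact_space (euclidean :: 'g topology) \<and>
     closed P \<and> 0 \<in> P \<and> (\<forall>a\<in>P. \<forall>b\<in>P. a + b \<in> P) \<and>
     (\<forall>g. \<exists>a\<in>P. \<exists>b\<in>P. g = a - b) \<and>
     P \<subseteq> closure (interior P)"

definition isom_rep_crp :: "'g::{topological_group_add} set \<Rightarrow> ('g \<Rightarrow> 'h::{real_inner,complete_space} \<Rightarrow> 'h) \<Rightarrow> bool" where
  "isom_rep_crp P V \<longleftrightarrow>
     (\<forall>a\<in>P. bounded_linear (V a)) \<and>
     (\<forall>x. continuous_on P (\<lambda>a. V a x)) \<and>
     (\<forall>x. continuous_on P (\<lambda>a. adjoint (V a) x)) \<and>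
     (\<forall>a\<in>P. \<forall>x. norm (V a x) = norm x) \<and>
     (\<forall>a\<in>P. \<forall>b\<in>P. V a \<circ> V b = V (b + a)) \<and>
     (\<forall>a\<in>P. \<forall>b\<in>P. (V a \<circ> adjoint (V a)) \<circ> (V b \<circ> adjoint (V b))
                   = (V b \<circ> adjoint (V b)) \<circ> (V a \<circ> adjoint (V a)))"

definition Wop :: "'g::group_add set \<Rightarrow> ('g \<Rightarrow> 'h::real_inner \<Rightarrow> 'h) \<Rightarrow> 'g \<Rightarrow> 'h \<Rightarrow> 'h" where
  "Wop P V g = (let ab = (SOME ab. fst ab \<in> P \<and> snd ab \<in> P \<and> g = fst ab - snd ab)
                in adjoint (V (snd ab)) \<circ> V (fst ab))"

definition Eop :: "'g::group_add set \<Rightarrow> ('g \<Rightarrow> 'h::real_inner \<Rightarrow> 'h) \<Rightarrow> 'g \<Rightarrow> 'h \<Rightarrow> 'h" where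
  "Eop P V g = Wop P V g \<circ> adjoint (Wop P V g)"

end

theory Submission
  imports Defs
begin

text \<open>
  The whole argument runs on
  the identities V_a^* V_a = 1, V_{ba}^* = V_b^* V_a^* and the commutation of the range
  projections V_a V_a^*.  Since the library provides the adjoint only as a choice
  operator, we first show that it is the genuine Hilbert space adjoint: via the
  Riesz representation theorem (from the existence of a vector of minimal norm in a
  closed convex set) every bounded operator T has a bounded adjoint, and then an isometry
  satisfies T^* T = 1 and T^* is a contraction.  Then, in a locale fixing P and V, the right Ore condition
  b_1 v = b_2 u coming from G = P P^{-1} shows that V_b^* V_a depends only on a b^{-1};
  this gives (1), and explicit formulas for W_g^* and E_g.  Bringing two group elements to
  a common right denominator, or to the chained form g = a b^{-1}, h = c a^{-1}, reduces
  (2), (3) and (5) to computations with commuting range projections.  Continuity (4) holds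
  because near any g_0 one has W_g = V_b^* V_{gb} with gb in the interior of P.
\<close>

text \<open>Minimal norm vectors: a nonempty closed convex subset of a Hilbert space contains a
  vector of least norm.  Minimising sequences are Cauchy by the parallelogram law.\<close>

lemma closed_convex_min_norm:
  fixes S :: "'h::{real_inner,complete_space} set"
  assumes closed: "closed S" and convex: "convex S" and nonempty: "S \<noteq> {}"
  obtains z where "z \<in> S" "\<And>w. w \<in> S \<Longrightarrow> norm z \<le> norm w"
proof -
  define D where "D = Inf ((\<lambda>x. x \<bullet> x) ` S)"
  have bdd: "bdd_below ((\<lambda>x. x \<bullet> x) ` S)" by (rule bdd_belowI[of _ 0]) auto
  have D_le: "D \<le> x \<bullet> x" if "x \<in> S" for x
    unfolding D_def using that bdd by (intro cInf_lower) auto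
  have "\<exists>x\<in>S. x \<bullet> x < D + 1 / (real n + 1)" for n
    using cInf_lessD[of "(\<lambda>x. x \<bullet> x) ` S" "D + 1 / (real n + 1)"] nonempty
    unfolding D_def by (auto simp: add_pos_pos)
  then obtain X where X_in: "\<And>n. X n \<in> S" and X_lt: "\<And>n. X n \<bullet> X n < D + 1 / (real n + 1)"
    by metis
  have X_close: "(norm (X m - X n))\<^sup>2 \<le> 2 / (real m + 1) + 2 / (real n + 1)" for m n
  proof -
    have "(1/2) *\<^sub>R X m + (1/2) *\<^sub>R X n \<in> S" using X_in by (intro convexD[OF convex]) auto
    then have "4 * D \<le> (X m + X n) \<bullet> (X m + X n)"
      using D_le by (fastforce simp: inner_add inner_commute)
    moreover have "(norm (X m - X n))\<^sup>2 = 2 * (X m \<bullet> X m) + 2 * (X n \<bullet> X n) - (X m + X n) \<bullet> (X m + X n)"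
      by (simp add: power2_norm_eq_inner inner_diff inner_add inner_commute)
    ultimately show ?thesis using X_lt[of m] X_lt[of n] by linarith
  qed
  have "Cauchy X"
  proof (rule CauchyI)
    fix e :: real assume "0 < e"
    then obtain M :: nat where M: "4 / (e * e) < real M" using reals_Archimedean2 by blast
    have "4 / (real M + 1) < e\<^sup>2"
      using M \<open>0 < e\<close> by (simp add: field_simps power2_eq_square) (smt (verit) mult_pos_pos)
    moreover have tail: "2 / (real k + 1) \<le> 2 / (real M + 1)" if "M \<le> k" for k
      using that by (simp add: frac_le)
    moreover have "4 / (real M + 1) = 2 / (real M + 1) + 2 / (real M + 1)" by simp
    ultimately have "(norm (X m - X n))\<^sup>2 < e\<^sup>2" if "M \<le> m" "M \<le> n" for m n
      using X_close[of m n] tail[OF that(1)] tail[OF that(2)] by linarith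
    then show "\<exists>M. \<forall>m\<ge>M. \<forall>n\<ge>M. norm (X m - X n) < e"
      using \<open>0 < e\<close> by (meson power_less_imp_less_base less_imp_le)
  qed
  then obtain z where lim: "X \<longlonglongrightarrow> z" using Cauchy_convergent convergent_def by blast
  have "z \<in> S" using closed_sequentially[OF closed] X_in lim by blast
  moreover have "z \<bullet> z \<le> D"
  proof (rule LIMSEQ_le[OF tendsto_inner[OF lim lim]])
    show "(\<lambda>n. D + 1 / (real n + 1)) \<longlonglongrightarrow> D"
      using tendsto_add[OF tendsto_const LIMSEQ_inverse_real_of_nat] 
      by (simp add: inverse_eq_divide add.commute)
    show "\<exists>N. \<forall>n\<ge>N. X n \<bullet> X n \<le> D + 1 / (real n + 1)" using X_lt less_imp_le by blast
  qed
  ultimately show ?thesis using that D_le norm_le by (meson order_trans)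
qed

text \<open>Riesz representation: every bounded linear functional f is of the form x \<mapsto> x \<bullet> z.
  The vector z is a multiple of the least norm vector on the hyperplane f = 1.\<close>
lemma riesz_representation:
  fixes f :: "'h::{real_inner,complete_space} \<Rightarrow> real"
  assumes "bounded_linear f"
  obtains z where "\<And>x. f x = x \<bullet> z"
proof (cases "\<forall>x. f x = 0")
  case True
  then show ?thesis using that[of 0] by simp
next
  case False
  interpret f: bounded_linear f by fact
  obtain y where "f y \<noteq> 0" using False by blast
  define S where "S = {x. f x = 1}"
  have "y /\<^sub>R f y \<in> S" using \<open>f y \<noteq> 0\<close> by (simp add: S_def f.scale)
  moreover have "closed S" unfolding S_def
    by (intro closed_Collect_eq linear_continuous_on continuous_on_const assms)
  moreover have "convex S" unfolding S_def convex_def by (simp add: f.add f.scale)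
  ultimately obtain z where z: "f z = 1" and z_min: "\<And>w. f w = 1 \<Longrightarrow> norm z \<le> norm w"
    using closed_convex_min_norm[of S] by (auto simp: S_def)
  have orth: "z \<bullet> k = 0" if "f k = 0" for k
  proof (cases "k = 0")
    case False
    define s q where "s = z \<bullet> k" and "q = k \<bullet> k"
    have "q > 0" using False by (simp add: q_def)
    define t where "t = - s / q"
    have "norm z \<le> norm (z + t *\<^sub>R k)" using z that by (intro z_min) (simp add: f.add f.scale)
    then have "0 \<le> 2 * t * s + t * t * q"
      by (simp add: s_def q_def norm_le inner_add inner_commute algebra_simps)
    also have "\<dots> = - (s * s) / q"
      using \<open>q > 0\<close> by (simp add: t_def field_simps)
    finally have "s * s \<le> 0" using \<open>q > 0\<close> by (simp add: divide_le_0_iff)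
    then have "s = 0" by (metis antisym mult_eq_0_iff zero_le_square)
    then show ?thesis by (simp add: s_def)
  qed simp
  have "f x = x \<bullet> (z /\<^sub>R (z \<bullet> z))" for x
  proof -
    have "z \<bullet> (x - f x *\<^sub>R z) = 0" using z by (intro orth) (simp add: f.diff f.scale)
    then have "z \<bullet> x = f x * (z \<bullet> z)" by (simp add: inner_diff)
    moreover have "z \<noteq> 0" using z by auto
    ultimately show ?thesis by (simp add: inner_commute)
  qed
  then show ?thesis using that by blast
qed

lemma adjoint_works_hilbert:
  fixes T :: "'a::{real_inner,complete_space} \<Rightarrow> 'b::real_inner"
  assumes "bounded_linear T"
  shows "T x \<bullet> y = x \<bullet> adjoint T y"
proof -
  have "\<exists>z. \<forall>x. T x \<bullet> y = x \<bullet> z" for y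
    using riesz_representation[OF bounded_linear_compose[OF bounded_linear_inner_left assms]]
    by metis
  then obtain g where "\<forall>x y. T x \<bullet> y = x \<bullet> g y" by metis
  then have "\<forall>x y. T x \<bullet> y = x \<bullet> adjoint T y"
    unfolding adjoint_def by (rule someI[where x = g])
  then show ?thesis by blast
qed

lemma bounded_linear_adjoint:
  fixes T :: "'a::{real_inner,complete_space} \<Rightarrow> 'b::real_inner"
  assumes T: "bounded_linear T"
  shows "bounded_linear (adjoint T)"
proof -
  interpret T: bounded_linear T by (rule T)
  obtain K where K: "\<And>x. norm (T x) \<le> norm x * K" "K > 0" using T.pos_bounded by blast
  note adj = adjoint_works_hilbert[OF T]
  show ?thesis
  proof (rule bounded_linear_intro[where K = K])
    show "adjoint T (x + y) = adjoint T x + adjoint T y" for x y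
      by (rule vector_eq_ldot[THEN iffD1]) (auto simp: adj[symmetric] inner_add)
    show "adjoint T (r *\<^sub>R x) = r *\<^sub>R adjoint T x" for r x
      by (rule vector_eq_ldot[THEN iffD1]) (auto simp: adj[symmetric])
    show "norm (adjoint T y) \<le> norm y * K" for y
    proof -
      have "(norm (adjoint T y))\<^sup>2 = T (adjoint T y) \<bullet> y"
        by (simp add: adj power2_norm_eq_inner)
      also have "\<dots> \<le> norm (adjoint T y) * K * norm y"
        using norm_cauchy_schwarz[of "T (adjoint T y)" y] K(1)[of "adjoint T y"]
        by (meson mult_right_mono norm_ge_zero order_trans)
      finally show ?thesis
        by (cases "adjoint T y = 0") (use K(2) in \<open>auto simp: power2_eq_square mult_ac\<close>)
    qed
  qed
qed

lemma adjoint_compose_hilbert: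
  fixes S :: "'b::{real_inner,complete_space} \<Rightarrow> 'c::real_inner"
    and T :: "'a::{real_inner,complete_space} \<Rightarrow> 'b"
  assumes "bounded_linear S" "bounded_linear T"
  shows "adjoint (S \<circ> T) = adjoint T \<circ> adjoint S"
  by (rule adjoint_unique) (simp add: adjoint_works_hilbert assms)

lemma isometry_inner:
  fixes T :: "'a::real_inner \<Rightarrow> 'b::real_inner"
  assumes "linear T" and isom: "\<And>x. norm (T x) = norm x"
  shows "T x \<bullet> T y = x \<bullet> y"
proof -
  have "T u \<bullet> T u = u \<bullet> u" for u using isom[of u] by (simp flip: power2_norm_eq_inner)
  from this[of "x + y"] this[of x] this[of y] show ?thesis
    by (simp add: linear_add[OF assms(1)] inner_add inner_commute)
qed

lemma isometry_adjoint_cancel: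
  fixes T :: "'a::{real_inner,complete_space} \<Rightarrow> 'b::real_inner"
  assumes "bounded_linear T" "\<And>x. norm (T x) = norm x"
  shows "adjoint T (T x) = x"
  by (rule vector_eq_ldot[THEN iffD1])
    (simp add: adjoint_works_hilbert[OF assms(1), symmetric] isometry_inner assms bounded_linear.linear)

lemma isometry_adjoint_contraction:
  fixes T :: "'a::{real_inner,complete_space} \<Rightarrow> 'b::real_inner"
  assumes "bounded_linear T" "\<And>x. norm (T x) = norm x"
  shows "norm (adjoint T y) \<le> norm y"
proof -
  have "(norm (adjoint T y))\<^sup>2 = T (adjoint T y) \<bullet> y"
    by (simp add: adjoint_works_hilbert[OF assms(1)] power2_norm_eq_inner)
  also have "\<dots> \<le> norm (adjoint T y) * norm y"
    using norm_cauchy_schwarz[of "T (adjoint T y)" y] by (simp add: assms(2))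
  finally show ?thesis by (cases "adjoint T y = 0") (auto simp: power2_eq_square)
qed

text \<open>An operator with T T^* T = T is a partial isometry: on the orthogonal complement of the
  kernel, T^* T acts as the identity.\<close>
lemma partial_isometryI:
  fixes T :: "'h::{real_inner,complete_space} \<Rightarrow> 'h"
  assumes T: "bounded_linear T" and TTT: "\<And>x. T (adjoint T (T x)) = T x"
  shows "partial_isometry T"
  unfolding partial_isometry_def
proof (intro conjI T allI impI)
  fix x assume ker_orth: "\<forall>y. T y = 0 \<longrightarrow> x \<bullet> y = 0"
  have "T (x - adjoint T (T x)) = 0" using TTT by (simp add: linear_diff[OF bounded_linear.linear[OF T]])
  then have "x \<bullet> (x - adjoint T (T x)) = 0" using ker_orth by blast
  then have "x \<bullet> x = T x \<bullet> T x" by (simp add: inner_diff adjoint_works_hilbert[OF T])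
  then show "norm (T x) = norm x" by (simp add: norm_eq_sqrt_inner)
qed

lemma diff_add_right_cancel: "(a + v) - (b + v) = a - (b::'g::group_add)"
  by (simp only: diff_conv_add_uminus minus_add add.assoc add_minus_cancel)

lemma diff_add_diff_cancel: "(c - a) + (a - b) = c - (b::'g::group_add)"
  by (simp only: diff_conv_add_uminus add.assoc minus_add_cancel)

lemma diff_eq_diff_shift:
  fixes a b a' b' c d :: "'g::group_add"
  assumes "a - b = a' - b'" and "b + d = b' + c"
  shows "a + d = a' + c"
proof -
  have "a + d = (a - b) + (b + d)" by (simp only: diff_conv_add_uminus add.assoc minus_add_cancel)
  also have "\<dots> = (a' - b') + (b' + c)" using assms by (simp only:)
  also have "\<dots> = a' + c" by (simp only: diff_conv_add_uminus add.assoc minus_add_cancel)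
  finally show ?thesis .
qed

locale crp_representation =
  fixes P :: "'g::{topological_group_add,t2_space,second_countable_topology} set"
    and V :: "'g \<Rightarrow> 'h::{real_inner,complete_space} \<Rightarrow> 'h"
  assumes admissible: "admissible_semigroup P" and representation: "isom_rep_crp P V"
begin

abbreviation Vs :: "'g \<Rightarrow> 'h \<Rightarrow> 'h" where "Vs a \<equiv> adjoint (V a)"

lemma add_in_P: "a \<in> P \<Longrightarrow> b \<in> P \<Longrightarrow> a + b \<in> P"
  using admissible by (simp add: admissible_semigroup_def)

lemma decompose: obtains a b where "a \<in> P" "b \<in> P" "g = a - b"
  using admissible unfolding admissible_semigroup_def by blast

lemma V_bounded_linear: "a \<in> P \<Longrightarrow> bounded_linear (V a)"
  using representation by (simp add: isom_rep_crp_def)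

lemma V_isometry: "a \<in> P \<Longrightarrow> norm (V a x) = norm x"
  using representation by (simp add: isom_rep_crp_def)

lemma V_mult: "a \<in> P \<Longrightarrow> b \<in> P \<Longrightarrow> V a (V b x) = V (b + a) x"
  using representation unfolding isom_rep_crp_def by (metis comp_apply)

lemma range_proj_commute:
  "a \<in> P \<Longrightarrow> b \<in> P \<Longrightarrow> V a (Vs a (V b (Vs b u))) = V b (Vs b (V a (Vs a u)))"
  using representation unfolding isom_rep_crp_def by (metis comp_apply)

lemma Vs_bounded_linear: "a \<in> P \<Longrightarrow> bounded_linear (Vs a)"
  by (simp add: V_bounded_linear bounded_linear_adjoint)

lemma V_adjoint: "a \<in> P \<Longrightarrow> V a x \<bullet> y = x \<bullet> Vs a y"
  by (simp add: V_bounded_linear adjoint_works_hilbert)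

lemma Vs_V: "a \<in> P \<Longrightarrow> Vs a (V a x) = x"
  by (simp add: V_bounded_linear V_isometry isometry_adjoint_cancel)

lemma Vs_contraction: "a \<in> P \<Longrightarrow> norm (Vs a y) \<le> norm y"
  by (simp add: V_bounded_linear V_isometry isometry_adjoint_contraction)

lemma Vs_mult:
  assumes "a \<in> P" "b \<in> P" shows "Vs (b + a) y = Vs b (Vs a y)"
proof -
  have "V (b + a) = V a \<circ> V b" using V_mult[OF assms] by auto
  then show ?thesis using adjoint_compose_hilbert[OF V_bounded_linear V_bounded_linear] assms
    by simp
qed

text \<open>Right Ore condition: any two elements b_1, b_2 of G have a common right multiple
  b_1 v = b_2 u with u, v \<in> P; this is where G = P P^{-1} enters.\<close>
lemma ore_condition: obtains u v where "u \<in> P" "v \<in> P" "b1 + v = b2 + u"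
proof -
  obtain u v where uv: "u \<in> P" "v \<in> P" "-b2 + b1 = u - v" by (rule decompose)
  have "b1 + v = b2 + ((-b2 + b1) + v)" by (simp only: add.assoc add_minus_cancel)
  also have "\<dots> = b2 + u" by (simp only: uv(3) diff_add_cancel)
  finally show ?thesis using that uv(1,2) by blast
qed

text \<open>Part (1), independence: if a b^{-1} = a' b'^{-1}, pick c, d with b d = b' c; then also
  a d = a' c, and V_b^* V_a = V_{bd}^* V_{ad} = V_{b'c}^* V_{a'c} = V_{b'}^* V_{a'}.\<close>
lemma W_independent:
  assumes "a \<in> P" "b \<in> P" "a' \<in> P" "b' \<in> P" "a - b = a' - b'"
  shows "Vs b (V a x) = Vs b' (V a' x)"
proof -
  obtain c d where cd: "c \<in> P" "d \<in> P" "b + d = b' + c" by (rule ore_condition)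
  have shift: "a + d = a' + c" using diff_eq_diff_shift[OF assms(5) cd(3)] .
  have "Vs b (V a x) = Vs b (Vs d (V d (V a x)))" using Vs_V cd by simp
  also have "\<dots> = Vs (b + d) (V (a + d) x)" using Vs_mult V_mult assms cd(1,2) by simp
  also have "\<dots> = Vs (b' + c) (V (a' + c) x)" unfolding cd(3) shift ..
  also have "\<dots> = Vs b' (Vs c (V c (V a' x)))" using Vs_mult V_mult assms cd(1,2) by simp
  also have "\<dots> = Vs b' (V a' x)" using Vs_V cd by simp
  finally show ?thesis .
qed

lemma Wop_eq:
  assumes "a \<in> P" "b \<in> P" "g = a - b"
  shows "Wop P V g = Vs b \<circ> V a"
proof -
  define ab where "ab = (SOME ab. fst ab \<in> P \<and> snd ab \<in> P \<and> g = fst ab - snd ab)"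
  have "fst ab \<in> P \<and> snd ab \<in> P \<and> g = fst ab - snd ab"
    unfolding ab_def by (rule someI[where x = "(a, b)"]) (simp add: assms)
  then have "Vs (snd ab) \<circ> V (fst ab) = Vs b \<circ> V a"
    using W_independent[of "fst ab" "snd ab" a b] assms by auto
  then show ?thesis unfolding Wop_def ab_def Let_def by simp
qed

lemma Wop_adjoint:
  assumes "a \<in> P" "b \<in> P" "g = a - b"
  shows "adjoint (Wop P V g) = Vs a \<circ> V b"
  unfolding Wop_eq[OF assms]
proof (rule adjoint_unique, intro allI)
  fix x y
  have "Vs b (V a x) \<bullet> y = V a x \<bullet> V b y" by (metis V_adjoint assms(2) inner_commute)
  then show "(Vs b \<circ> V a) x \<bullet> y = x \<bullet> (Vs a \<circ> V b) y" by (simp add: V_adjoint assms(1))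
qed

lemma Eop_eq:
  assumes "a \<in> P" "b \<in> P" "g = a - b"
  shows "Eop P V g x = Vs b (V a (Vs a (V b x)))"
  unfolding Eop_def comp_apply Wop_adjoint[OF assms] by (simp add: Wop_eq[OF assms])

lemma Wop_bounded_linear: "bounded_linear (Wop P V g)"
proof -
  obtain a b where ab: "a \<in> P" "b \<in> P" "g = a - b" by (rule decompose)
  show ?thesis unfolding Wop_eq[OF ab] comp_def
    using bounded_linear_compose[OF Vs_bounded_linear V_bounded_linear] ab by blast
qed

lemma common_denominator:
  obtains a a' c where "a \<in> P" "a' \<in> P" "c \<in> P" "g = a - c" "h = a' - c"
proof -
  obtain a1 b1 where 1: "a1 \<in> P" "b1 \<in> P" "g = a1 - b1" by (rule decompose)
  obtain a2 b2 where 2: "a2 \<in> P" "b2 \<in> P" "h = a2 - b2" by (rule decompose)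
  obtain u v where uv: "u \<in> P" "v \<in> P" "b1 + v = b2 + u" by (rule ore_condition)
  have g: "g = (a1 + v) - (b1 + v)" unfolding 1(3) by (rule diff_add_right_cancel[symmetric])
  have h: "h = (a2 + u) - (b1 + v)" unfolding 2(3) uv(3) by (rule diff_add_right_cancel[symmetric])
  show ?thesis by (rule that[OF add_in_P[OF 1(1) uv(2)] add_in_P[OF 2(1) uv(1)] add_in_P[OF 1(2) uv(2)] g h])
qed

lemma chain_decomposition:
  obtains a b c where "a \<in> P" "b \<in> P" "c \<in> P" "g = a - b" "h = c - a"
proof -
  obtain a1 b1 where 1: "a1 \<in> P" "b1 \<in> P" "g = a1 - b1" by (rule decompose)
  obtain c1 d1 where 2: "c1 \<in> P" "d1 \<in> P" "h = c1 - d1" by (rule decompose)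
  obtain u v where uv: "u \<in> P" "v \<in> P" "a1 + v = d1 + u" by (rule ore_condition)
  have g: "g = (a1 + v) - (b1 + v)" unfolding 1(3) by (rule diff_add_right_cancel[symmetric])
  have h: "h = (c1 + u) - (a1 + v)" unfolding 2(3) uv(3) by (rule diff_add_right_cancel[symmetric])
  show ?thesis by (rule that[OF add_in_P[OF 1(1) uv(2)] add_in_P[OF 1(2) uv(2)] add_in_P[OF 2(1) uv(1)] g h])
qed

text \<open>Part (1): W_g W_g^* W_g = V_b^* (V_a V_a^*)(V_b V_b^*) V_a = V_b^* V_a, so W_g is a
  partial isometry.\<close>
lemma Wop_partial_isometry: "partial_isometry (Wop P V g)"
proof (rule partial_isometryI[OF Wop_bounded_linear])
  fix x
  obtain a b where ab: "a \<in> P" "b \<in> P" "g = a - b" by (rule decompose)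
  have "Wop P V g (adjoint (Wop P V g) (Wop P V g x)) = Vs b (V a (Vs a (V b (Vs b (V a x)))))"
    unfolding Wop_adjoint[OF ab] by (simp add: Wop_eq[OF ab])
  also have "V a (Vs a (V b (Vs b (V a x)))) = V b (Vs b (V a (Vs a (V a x))))"
    by (rule range_proj_commute[OF ab(1,2)])
  also have "Vs b (V b (Vs b (V a (Vs a (V a x))))) = Vs b (V a x)"
    by (simp add: Vs_V ab)
  also have "\<dots> = Wop P V g x" by (simp add: Wop_eq[OF ab])
  finally show "Wop P V g (adjoint (Wop P V g) (Wop P V g x)) = Wop P V g x" .
qed

text \<open>Part (2): with a common denominator c, E_g E_h = V_c^* P_a P_c P_{a'} V_c where
  P_x = V_x V_x^*, and the three range projections commute.\<close>
lemma Eop_commute: "Eop P V g \<circ> Eop P V h = Eop P V h \<circ> Eop P V g"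
proof
  fix x
  obtain a a' c where P: "a \<in> P" "a' \<in> P" "c \<in> P" and g: "g = a - c" and h: "h = a' - c"
    by (rule common_denominator)
  define y where "y = V c x"
  have "(Eop P V g \<circ> Eop P V h) x = Vs c (V a (Vs a (V c (Vs c (V a' (Vs a' y))))))"
    by (simp add: Eop_eq[OF P(1,3) g] Eop_eq[OF P(2,3) h] y_def)
  also have "V a (Vs a (V c (Vs c (V a' (Vs a' y))))) = V c (Vs c (V a (Vs a (V a' (Vs a' y)))))"
    by (rule range_proj_commute[OF P(1,3)])
  also have "V a (Vs a (V a' (Vs a' y))) = V a' (Vs a' (V a (Vs a y)))"
    by (rule range_proj_commute[OF P(1,2)])
  also have "V c (Vs c (V a' (Vs a' (V a (Vs a y))))) = V a' (Vs a' (V c (Vs c (V a (Vs a y)))))"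
    by (rule range_proj_commute[OF P(3,2)])
  also have "Vs c (V a' (Vs a' (V c (Vs c (V a (Vs a y)))))) = (Eop P V h \<circ> Eop P V g) x"
    by (simp add: Eop_eq[OF P(1,3) g] Eop_eq[OF P(2,3) h] y_def)
  finally show "(Eop P V g \<circ> Eop P V h) x = (Eop P V h \<circ> Eop P V g) x" .
qed

lemma Eop_quadratic_form:
  assumes "a \<in> P" "b \<in> P" "g = a - b"
  shows "Eop P V g x \<bullet> x = (norm (Vs a (V b x)))\<^sup>2"
proof -
  have "Eop P V g x \<bullet> x = V b x \<bullet> V a (Vs a (V b x))"
    unfolding Eop_eq[OF assms] by (metis V_adjoint assms(2) inner_commute)
  also have "\<dots> = Vs a (V b x) \<bullet> Vs a (V b x)" by (metis V_adjoint assms(1) inner_commute)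
  finally show ?thesis by (simp add: power2_norm_eq_inner)
qed

text \<open>Part (3): if g_1 = p g_2 with p \<in> P and g_2 = a b^{-1}, then g_1 = (pa) b^{-1} and
  V_{pa}^* = V_p^* V_a^* with V_p^* a contraction.\<close>
lemma Eop_mono:
  assumes "g1 - g2 \<in> P"
  shows "op_le (Eop P V g1) (Eop P V g2)"
  unfolding op_le_def
proof
  fix x
  define p where "p = g1 - g2"
  obtain a b where ab: "a \<in> P" "b \<in> P" "g2 = a - b" by (rule decompose)
  have "g1 = p + g2" unfolding p_def by (simp only: diff_add_cancel)
  then have g1: "g1 = (p + a) - b" unfolding ab(3) by (simp only: diff_conv_add_uminus add.assoc)
  have pP: "p \<in> P" "p + a \<in> P" using assms ab add_in_P by (auto simp: p_def)
  have "Eop P V g1 x \<bullet> x = (norm (Vs p (Vs a (V b x))))\<^sup>2"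
    unfolding Eop_quadratic_form[OF pP(2) ab(2) g1] Vs_mult[OF ab(1) pP(1)] ..
  also have "\<dots> \<le> (norm (Vs a (V b x)))\<^sup>2"
    by (rule power_mono[OF Vs_contraction[OF pP(1)]]) simp
  also have "\<dots> = Eop P V g2 x \<bullet> x" unfolding Eop_quadratic_form[OF ab] ..
  finally show "Eop P V g1 x \<bullet> x \<le> Eop P V g2 x \<bullet> x" .
qed

text \<open>Part (5): for g = a b^{-1}, h = c a^{-1} we get hg = c b^{-1} and
  W_g W_h = V_b^* P_a V_c = V_b^* P_b P_a V_c = E_g W_{hg}.\<close>
lemma Wop_product: "Wop P V g \<circ> Wop P V h = Eop P V g \<circ> Wop P V (h + g)"
proof
  fix x
  obtain a b c where P: "a \<in> P" "b \<in> P" "c \<in> P" and g: "g = a - b" and h: "h = c - a"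
    by (rule chain_decomposition)
  have hg: "h + g = c - b" unfolding g h by (rule diff_add_diff_cancel)
  define y where "y = V c x"
  have "(Wop P V g \<circ> Wop P V h) x = Vs b (V a (Vs a y))"
    by (simp add: Wop_eq[OF P(1,2) g] Wop_eq[OF P(3,1) h] y_def)
  also have "\<dots> = Vs b (V b (Vs b (V a (Vs a y))))" by (simp add: Vs_V P)
  also have "V b (Vs b (V a (Vs a y))) = V a (Vs a (V b (Vs b y)))"
    by (rule range_proj_commute[OF P(2,1)])
  also have "Vs b (V a (Vs a (V b (Vs b y)))) = (Eop P V g \<circ> Wop P V (h + g)) x"
    by (simp add: Eop_eq[OF P(1,2) g] Wop_eq[OF P(3,2) hg] y_def)
  finally show "(Wop P V g \<circ> Wop P V h) x = (Eop P V g \<circ> Wop P V (h + g)) x" .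
qed

text \<open>Part (4) uses that the interior of P is nonempty (it is dense in P \<ni> 0) and is
  invariant under left translation by elements of P.\<close>
lemma interior_nonempty: "interior P \<noteq> {}"
  using admissible by (auto simp: admissible_semigroup_def)

lemma add_interior:
  assumes "a \<in> P" "c \<in> interior P"
  shows "a + c \<in> interior P"
proof -
  define S where "S = (\<lambda>x. -a + x) -` interior P"
  have "open S" unfolding S_def by (rule continuous_open_vimage) (auto intro!: continuous_intros)
  moreover have "S \<subseteq> P"
  proof
    fix x assume "x \<in> S"
    then have "a + (-a + x) \<in> P" unfolding S_def using interior_subset add_in_P[OF assms(1)] by blast
    then show "x \<in> P" by (simp only: add_minus_cancel)
  qed
  ultimately have "S \<subseteq> interior P" by (rule interior_maximal[rotated])
  moreover have "a + c \<in> S" unfolding S_def using assms(2) by (simp only: vimage_eq minus_add_cancel)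
  ultimately show ?thesis by blast
qed

lemma Wop_strongly_continuous: "continuous_on UNIV (\<lambda>g. Wop P V g x)"
proof (rule continuous_at_imp_continuous_on, intro ballI)
  fix g0 :: 'g
  obtain a0 b0 where ab: "a0 \<in> P" "b0 \<in> P" "g0 = a0 - b0" by (rule decompose)
  obtain c where c: "c \<in> interior P" using interior_nonempty by blast
  define b where "b = b0 + c"
  have bP: "b \<in> P" unfolding b_def using ab c interior_subset add_in_P by blast
  define U where "U = (\<lambda>g. g + b) -` interior P"
  have "open U" unfolding U_def by (rule continuous_open_vimage) (auto intro!: continuous_intros)
  have "g0 + b = a0 + c" unfolding ab(3) b_def
    by (simp only: diff_conv_add_uminus add.assoc minus_add_cancel)
  then have g0U: "g0 \<in> U" unfolding U_def using add_interior[OF ab(1) c] by simp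
  text \<open>Near g0 the operator W_g is V_b^* V_{gb}, with gb moving in the interior of P.\<close>
  have local_formula: "Wop P V g x = Vs b (V (g + b) x)" if "g \<in> U" for g
  proof -
    have "g + b \<in> P" using that interior_subset unfolding U_def by auto
    moreover have "g = (g + b) - b" by (simp only: add_diff_cancel)
    ultimately have "Wop P V g = Vs b \<circ> V (g + b)" by (rule Wop_eq[OF _ bP])
    then show ?thesis by simp
  qed
  have "isCont (\<lambda>a. V a x) (g0 + b)"
    using representation g0U unfolding U_def isom_rep_crp_def
    by (intro continuous_on_interior) auto
  moreover have "isCont (\<lambda>g. g + b) g0" by (intro continuous_intros)
  ultimately have "isCont (\<lambda>g. V (g + b) x) g0"
    using isCont_o2[where f = "\<lambda>g. g + b" and g = "\<lambda>a. V a x"] by blast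
  then have "isCont (\<lambda>g. Vs b (V (g + b) x)) g0"
    by (rule bounded_linear.isCont[OF Vs_bounded_linear[OF bP]])
  moreover have near: "eventually (\<lambda>g. Wop P V g x = Vs b (V (g + b) x)) (nhds g0)"
    unfolding eventually_nhds using \<open>open U\<close> g0U local_formula by blast
  ultimately show "isCont (\<lambda>g. Wop P V g x) g0" using isCont_cong[OF near] by simp
qed

end

theorem mainTheorem1:
  fixes P :: "'g::{topological_group_add,t2_space,second_countable_topology} set"
    and V :: "'g \<Rightarrow> 'h::{real_inner,complete_space} \<Rightarrow> 'h"
  assumes "admissible_semigroup P"
    and "isom_rep_crp P V"
  shows "(\<forall>g. \<forall>a\<in>P. \<forall>b\<in>P. g = a - b \<longrightarrow> Wop P V g = adjoint (V b) \<circ> V a)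
       \<and> (\<forall>g. partial_isometry (Wop P V g))
       \<and> (\<forall>g h. Eop P V g \<circ> Eop P V h = Eop P V h \<circ> Eop P V g)
       \<and> (\<forall>g1 g2. g1 - g2 \<in> P \<longrightarrow> op_le (Eop P V g1) (Eop P V g2))
       \<and> (\<forall>x. continuous_on UNIV (\<lambda>g. Wop P V g x))
       \<and> (\<forall>g h. Wop P V g \<circ> Wop P V h = Eop P V g \<circ> Wop P V (h + g))"
proof -
  interpret crp_representation P V using assms by unfold_locales
  show ?thesis
    by (intro conjI allI ballI impI Wop_eq Wop_partial_isometry Eop_commute Eop_mono
        Wop_strongly_continuous Wop_product)
qed

end
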